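(* Let $h>0$, $\mathbb{T}:=\{0,h,2h,\ldots\}$, $n\in\mathbb{N}$, and $p_0,\ldots,p_{n-1}\in\mathbb{C}\setminus\{-\tfrac1h\}$; define $p:\mathbb{T}\to\mathbb{C}$ by $p(t)=p_k$ if $\tfrac th\equiv k\pmod n$, $k\in\{0,\ldots,n-1\}$, where $p$ is periodic with period $n$ and not periodic with any smaller period. Consider $$\Delta_h x(t)-p(t)x(t)=0,\qquad t\in\mathbb{T},\qquad(\ast)$$ with $\Delta_hx(t):=\frac{x(t+h)-x(t)}{h}$. Let $e_p(t):=\prod_{j=0}^{t/h-1}(1+hp(jh))$ (empty product $=1$), so $|e_p(nh)|=\prod_{i=0}^{n-1}|1+hp_i|$. For $k\in\{0,\ldots,n-1\}$ let $$S_k:=\sum_{j=1}^{n}\frac{1}{\prod_{i=0}^{j-1}|1+hp_{(k+i)\bmod n}|}.$$ Assume $0<|e_p(nh)|\ne1$. Let $\varepsilon>0$ be fixed and $\phi:\mathbb{T}\to\mathbb{C}$ satisfy $|\Delta_h\phi(t)-p(t)\phi(t)|\le\varepsilon$ for all $t\in\mathbb{T}$. Then: (i) If $|e_p(nh)|>1$, then $\lim_{t\to\infty}\frac{\phi(t)}{e_p(t)}$ exists, and $x(t):=\left(\lim_{s\to\infty}\frac{\phi(s)}{e_p(s)}\right)e_p(t)$ is the unique solution of $(\ast)$ with $|\phi(t)-x(t)|\le K_n\varepsilon$ for all $t\in\mathbb{T}$, where $$K_n:=\frac{h|e_p(nh)|}{-1+|e_p(nh)|}\max\{S_0,S_1,\ldots,S_{n-1}\};$$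 moreover $K_n$ is the minimum Ulam stability constant for $(\ast)$. (ii) If $0<|e_p(nh)|<1$, then any solution $x$ of $(\ast)$ with $|\phi(0)-x(0)|<\varepsilon h\frac{|e_p(nh)|S_0}{1-|e_p(nh)|}$ satisfies $$|\phi(t)-x(t)|<\frac{\varepsilon h|e_p(nh)|}{1-|e_p(nh)|}\max\{S_0,S_1,\ldots,S_{n-1}\}$$ for all $t\in\mathbb{T}$.
   Context: A constant $K>0$ is an Ulam stability constant for $(\ast)$ on $\mathbb{T}$ if for every $\varepsilon>0$ and every $\phi:\mathbb{T}\to\mathbb{C}$ with $|\Delta_h\phi(t)-p(t)\phi(t)|\le\varepsilon$ for all $t\in\mathbb{T}$, there is a solution $x$ of $(\ast)$ with $|\phi(t)-x(t)|\le K\varepsilon$ for all $t\in\mathbb{T}$. "Minimum" means $K_n$ is such a constant and no positive number smaller than $K_n$ is. Explicitly, $S_0=\frac{1}{|1+hp_0|}+\frac{1}{|1+hp_0||1+hp_1|}+\cdots+\frac{1}{|1+hp_0|\cdots|1+hp_{n-1}|}$ and $S_k$ is the analogous sum starting at $p_k$ and cycling through $p_{n-1},p_0,\ldots,p_{k-1}$. *)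

theory Defs
  imports "HOL-Analysis.Analysis"
begin

text \<open>The time scale T = {0, h, 2h, ...} is identified with nat via m \<mapsto> m*h;
  a function on T is a function nat \<Rightarrow> complex (value at t = m*h is f m).
  The coefficients p_0,...,p_{n-1} are given by pc :: nat \<Rightarrow> complex (only pc k, k < n, matter).\<close>

definition pfun :: "nat \<Rightarrow> (nat \<Rightarrow> complex) \<Rightarrow> nat \<Rightarrow> complex" where
  "pfun n pc m = pc (m mod n)"

definition minimal_period :: "nat \<Rightarrow> (nat \<Rightarrow> complex) \<Rightarrow> bool" where
  "minimal_period n f \<longleftrightarrow> n \<ge> 1 \<and> (\<forall>m. f (m + n) = f m) \<and>
     (\<forall>d. 0 < d \<and> d < n \<longrightarrow> \<not> (\<forall>m. f (m + d) = f m))"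

definition delta_h :: "real \<Rightarrow> (nat \<Rightarrow> complex) \<Rightarrow> nat \<Rightarrow> complex" where
  "delta_h h x m = (x (Suc m) - x m) / complex_of_real h"

definition is_solution :: "real \<Rightarrow> nat \<Rightarrow> (nat \<Rightarrow> complex) \<Rightarrow> (nat \<Rightarrow> complex) \<Rightarrow> bool" where
  "is_solution h n pc x \<longleftrightarrow> (\<forall>m. delta_h h x m - pfun n pc m * x m = 0)"

definition e_p :: "real \<Rightarrow> nat \<Rightarrow> (nat \<Rightarrow> complex) \<Rightarrow> nat \<Rightarrow> complex" where
  "e_p h n pc m = (\<Prod>j<m. 1 + complex_of_real h * pfun n pc j)"

definition S_k :: "real \<Rightarrow> nat \<Rightarrow> (nat \<Rightarrow> complex) \<Rightarrow> nat \<Rightarrow> real" where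
  "S_k h n pc k = (\<Sum>j=1..n. 1 / (\<Prod>i<j. cmod (1 + complex_of_real h * pc ((k + i) mod n))))"

definition is_ulam_const :: "real \<Rightarrow> nat \<Rightarrow> (nat \<Rightarrow> complex) \<Rightarrow> real \<Rightarrow> bool" where
  "is_ulam_const h n pc K \<longleftrightarrow> K > 0 \<and>
     (\<forall>\<epsilon>>0. \<forall>\<phi>. (\<forall>m. cmod (delta_h h \<phi> m - pfun n pc m * \<phi> m) \<le> \<epsilon>) \<longrightarrow>
        (\<exists>x. is_solution h n pc x \<and> (\<forall>m. cmod (\<phi> m - x m) \<le> K * \<epsilon>)))"

definition is_min_ulam_const :: "real \<Rightarrow> nat \<Rightarrow> (nat \<Rightarrow> complex) \<Rightarrow> real \<Rightarrow> bool" where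
  "is_min_ulam_const h n pc K \<longleftrightarrow> is_ulam_const h n pc K \<and>
     (\<forall>K'. 0 < K' \<and> K' < K \<longrightarrow> \<not> is_ulam_const h n pc K')"

end

theory Submission
  imports Defs
begin

text \<open>Every solution is a multiple \<open>c * e_p\<close> of the fundamental solution, and \<open>cmod e_p\<close> is
  multiplied by \<open>E = cmod (e_p h n pc n)\<close> over each period. Everything rests on the identity
  \<open>cmod (1 + h * p_k) * S_k = 1 - 1/E + S_(k+1)\<close>.

  For \<open>E > 1\<close> the increments of \<open>\<phi> / e_p\<close> are at most \<open>\<epsilon> * h / cmod (e_p (m + 1))\<close>, which
  are summable; so \<open>\<phi> / e_p\<close> converges to some \<open>L\<close>, and summing the tail period by period gives
  \<open>cmod (\<phi> m - L * e_p m) \<le> \<epsilon> * h * E / (E - 1) * S_(m mod n)\<close>. Two solutions at bounded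
  distance differ by a bounded multiple of \<open>e_p\<close>, hence coincide. The perturbation \<open>e_p\<close> times
  that tail sum has residual of modulus 1 and attains the bound at a maximising \<open>k\<close>, so no
  smaller constant works. For \<open>E < 1\<close> the weights \<open>h * E / (1 - E) * S_k\<close> satisfy
  \<open>cmod (1 + h * p_k) * C_k + h = C_(k+1)\<close>, which carries the initial error bound forward by
  induction.\<close>

lemma pfun_add_period [simp]: "pfun n pc (m + n) = pfun n pc m"
  by (simp add: pfun_def)

lemma pfun_mod [simp]: "pfun n pc (m mod n) = pfun n pc m"
  by (simp add: pfun_def)

lemma e_p_0 [simp]: "e_p h n pc 0 = 1"
  by (simp add: e_p_def)

lemma e_p_Suc: "e_p h n pc (Suc m) = e_p h n pc m * (1 + complex_of_real h * pfun n pc m)"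
  by (simp add: e_p_def)

lemma e_p_add_period: "e_p h n pc (m + n) = e_p h n pc m * e_p h n pc n"
  by (induction m) (simp_all add: e_p_Suc)

lemma norm_e_p_mult_period: "cmod (e_p h n pc (q * n)) = cmod (e_p h n pc n) ^ q"
proof (induction q)
  case (Suc q)
  have "e_p h n pc (Suc q * n) = e_p h n pc (q * n) * e_p h n pc n"
    using e_p_add_period[of h n pc "q * n"] by (simp add: add.commute)
  with Suc show ?case
    by (simp add: norm_mult)
qed simp

lemma residual_scaled:
  assumes "h \<noteq> 0"
  shows "x (Suc m) - (1 + complex_of_real h * pfun n pc m) * x m
           = complex_of_real h * (delta_h h x m - pfun n pc m * x m)"
  using assms by (simp add: delta_h_def field_simps)

lemma is_solution_iff_recurrence:
  assumes "h \<noteq> 0"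
  shows "is_solution h n pc x \<longleftrightarrow> (\<forall>m. x (Suc m) = (1 + complex_of_real h * pfun n pc m) * x m)"
proof -
  have "delta_h h x m - pfun n pc m * x m = 0 \<longleftrightarrow>
        x (Suc m) = (1 + complex_of_real h * pfun n pc m) * x m" for m
    using residual_scaled[OF assms, where x = x and m = m and n = n and pc = pc] assms by auto
  then show ?thesis
    by (simp add: is_solution_def)
qed

lemma is_solution_multiple_e_p:
  assumes "h \<noteq> 0"
  shows "is_solution h n pc (\<lambda>m. c * e_p h n pc m)"
  using assms by (simp add: is_solution_iff_recurrence e_p_Suc)

lemma is_solution_eq_multiple_e_p:
  assumes "h \<noteq> 0" and "is_solution h n pc x"
  shows "x m = x 0 * e_p h n pc m"
  using assms by (induction m) (simp_all add: is_solution_iff_recurrence e_p_Suc)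

lemma telescoping_bound_convergent:
  fixes v :: "nat \<Rightarrow> 'a::banach" and W :: "nat \<Rightarrow> real"
  assumes step: "\<And>m. norm (v (Suc m) - v m) \<le> W m - W (Suc m)" and W: "W \<longlonglongrightarrow> 0"
  shows "convergent v" and "norm (v m - lim v) \<le> W m"
proof -
  have telescope: "norm (v m - v (m + k)) \<le> W m - W (m + k)" for m k
  proof (induction k)
    case (Suc k)
    have "norm (v (m + k) - v (Suc (m + k))) \<le> W (m + k) - W (Suc (m + k))"
      using step by (simp add: norm_minus_commute)
    with Suc.IH have "norm (v m - v (Suc (m + k))) \<le> (W m - W (m + k)) + (W (m + k) - W (Suc (m + k)))"
      by (rule norm_diff_triangle_le)
    then show ?case
      by simp
  qed simp
  have close: "norm (v m - v m') \<le> norm (W m - W m')" for m m'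
  proof (cases "m \<le> m'")
    case True
    then show ?thesis
      using telescope[of m "m' - m"] by simp
  next
    case False
    then show ?thesis
      using telescope[of m' "m - m'"] by (simp add: norm_minus_commute)
  qed
  have "Cauchy W"
    using W by (rule LIMSEQ_imp_Cauchy)
  then have "Cauchy v"
    unfolding Cauchy_iff using close order.strict_trans1 by meson
  then show conv: "convergent v"
    by (rule Cauchy_convergent)
  show "norm (v m - lim v) \<le> W m"
  proof (rule tendsto_le[OF trivial_limit_sequentially])
    show "(\<lambda>k. norm (v m - v k)) \<longlonglongrightarrow> norm (v m - lim v)"
      using conv by (intro tendsto_intros) (simp add: convergent_LIMSEQ_iff)
    show "(\<lambda>k. W m - W k) \<longlonglongrightarrow> W m"
      using W by (auto intro: tendsto_eq_intros)
    show "\<forall>\<^sub>F k in sequentially. norm (v m - v k) \<le> W m - W k"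
      using telescope by (auto simp: eventually_sequentially dest: le_Suc_ex)
  qed
qed

lemma is_ulam_constD:
  assumes "is_ulam_const h n pc K" and "\<epsilon> > 0"
    and "\<And>m. cmod (delta_h h \<phi> m - pfun n pc m * \<phi> m) \<le> \<epsilon>"
  shows "\<exists>x. is_solution h n pc x \<and> (\<forall>m. cmod (\<phi> m - x m) \<le> K * \<epsilon>)"
  using assms unfolding is_ulam_const_def by blast

locale periodic_difference_eq =
  fixes h :: real and n :: nat and pc :: "nat \<Rightarrow> complex"
  assumes h_pos: "h > 0" and period_pos: "n > 0" and e_p_period_nonzero: "e_p h n pc n \<noteq> 0"
begin

abbreviation coef :: "nat \<Rightarrow> complex" where
  "coef m \<equiv> 1 + complex_of_real h * pfun n pc m"

abbreviation residual :: "(nat \<Rightarrow> complex) \<Rightarrow> nat \<Rightarrow> complex" where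
  "residual \<phi> m \<equiv> delta_h h \<phi> m - pfun n pc m * \<phi> m"

abbreviation E :: real where
  "E \<equiv> cmod (e_p h n pc n)"

abbreviation S :: "nat \<Rightarrow> real" where
  "S \<equiv> S_k h n pc"

lemma coef_nonzero: "coef m \<noteq> 0"
proof -
  have "\<forall>j<n. coef j \<noteq> 0"
    using e_p_period_nonzero by (simp add: e_p_def)
  then show ?thesis
    using period_pos by (metis mod_less_divisor pfun_mod)
qed

lemma e_p_nonzero: "e_p h n pc m \<noteq> 0"
  by (induction m) (simp_all add: e_p_Suc coef_nonzero)

lemma E_pos: "E > 0"
  using e_p_period_nonzero by simp

lemma prod_norm_coef_period: "(\<Prod>i<n. cmod (coef (k + i))) = E"
proof (induction k)
  case 0
  show ?case
    by (simp add: e_p_def prod_norm)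
next
  case (Suc k)
  have "cmod (coef k) * (\<Prod>i<n. cmod (coef (Suc k + i))) = (\<Prod>i<Suc n. cmod (coef (k + i)))"
    by (subst prod.lessThan_Suc_shift) simp
  also have "\<dots> = cmod (coef k) * E"
    using Suc.IH by (simp add: add.commute)
  finally show ?case
    using coef_nonzero[of k] by simp
qed

lemma norm_coef_mult_S: "cmod (coef k) * S k = 1 - 1 / E + S (Suc k)"
proof -
  define P where "P k j = (\<Prod>i<j. cmod (coef (k + i)))" for k j
  have S_eq: "S k = (\<Sum>j<n. 1 / P k (Suc j))" for k
    by (simp add: S_k_def P_def pfun_def sum.atLeast1_atMost_eq)
  have P_Suc: "P k (Suc j) = cmod (coef k) * P (Suc k) j" for j
    unfolding P_def by (subst prod.lessThan_Suc_shift) simp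
  have "cmod (coef k) * S k = (\<Sum>j<n. 1 / P (Suc k) j)"
    using coef_nonzero[of k] by (simp add: S_eq P_Suc sum_distrib_left)
  also have "\<dots> = (\<Sum>j<Suc n. 1 / P (Suc k) j) - 1 / E"
    using prod_norm_coef_period[of "Suc k"] by (simp add: P_def)
  also have "(\<Sum>j<Suc n. 1 / P (Suc k) j) = 1 + S (Suc k)"
    by (subst sum.lessThan_Suc_shift) (simp add: S_eq P_def)
  finally show ?thesis
    by simp
qed

lemma S_pos: "S k > 0"
  unfolding S_k_def using period_pos coef_nonzero
  by (intro sum_pos divide_pos_pos prod_pos) (auto simp: pfun_def)

lemma S_le_Max: "S k \<le> Max (S ` {..<n})"
proof -
  have "S (k mod n) \<le> Max (S ` {..<n})"
    using period_pos by (intro Max_ge) auto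
  then show ?thesis
    by (simp add: S_k_def mod_add_left_eq)
qed

lemma Max_S_attained: "\<exists>k. S k = Max (S ` {..<n})"
proof -
  have "Max (S ` {..<n}) \<in> S ` {..<n}"
    using period_pos by (intro Max_in) auto
  then show ?thesis
    by auto
qed

lemma contracting_error_bound:
  assumes "E < 1" and x: "is_solution h n pc x" and residual_bound: "\<And>m. cmod (residual \<phi> m) \<le> \<epsilon>"
    and initial: "cmod (\<phi> 0 - x 0) < \<epsilon> * (h * E / (1 - E) * S 0)"
  shows "cmod (\<phi> m - x m) < \<epsilon> * (h * E / (1 - E) * S m)"
proof (induction m)
  case 0
  show ?case
    using initial .
next
  case (Suc m)
  let ?C = "\<lambda>m. h * E / (1 - E) * S m"
  have "cmod (coef m) * ?C m = h * E / (1 - E) * (1 - 1 / E + S (Suc m))"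
    unfolding norm_coef_mult_S[symmetric] by (simp add: ac_simps)
  also have "\<dots> = ?C (Suc m) - h"
    using \<open>E < 1\<close> E_pos by (simp add: field_simps)
  finally have C_Suc: "cmod (coef m) * ?C m + h = ?C (Suc m)"
    by simp
  have "\<phi> (Suc m) - x (Suc m) = coef m * (\<phi> m - x m) + complex_of_real h * residual \<phi> m"
    using residual_scaled[of h \<phi> m n pc] x h_pos by (simp add: is_solution_iff_recurrence algebra_simps)
  then have "cmod (\<phi> (Suc m) - x (Suc m)) \<le> cmod (coef m) * cmod (\<phi> m - x m) + h * cmod (residual \<phi> m)"
    using norm_triangle_ineq[of "coef m * (\<phi> m - x m)" "complex_of_real h * residual \<phi> m"] h_pos
    by (simp add: norm_mult)
  also have "\<dots> < cmod (coef m) * (\<epsilon> * ?C m) + h * \<epsilon>"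
    using Suc.IH coef_nonzero[of m] residual_bound h_pos
    by (intro add_less_le_mono mult_strict_left_mono mult_left_mono) auto
  also have "\<dots> = \<epsilon> * (cmod (coef m) * ?C m + h)"
    by (simp add: algebra_simps)
  also have "\<dots> = \<epsilon> * ?C (Suc m)"
    unfolding C_Suc ..
  finally show ?case .
qed

theorem contracting_stability:
  assumes "E < 1" and x: "is_solution h n pc x" and residual_bound: "\<And>m. cmod (residual \<phi> m) \<le> \<epsilon>"
    and initial: "cmod (\<phi> 0 - x 0) < \<epsilon> * h * (E * S 0 / (1 - E))"
  shows "cmod (\<phi> m - x m) < \<epsilon> * h * E / (1 - E) * Max (S ` {..<n})"
proof -
  have "cmod (\<phi> m - x m) < \<epsilon> * (h * E / (1 - E) * S m)"
    using contracting_error_bound[OF \<open>E < 1\<close> x residual_bound] initial by simp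
  also have "\<dots> \<le> \<epsilon> * (h * E / (1 - E) * Max (S ` {..<n}))"
    using residual_bound[of 0] S_le_Max \<open>E < 1\<close> E_pos h_pos
    by (intro mult_left_mono) (auto intro: order_trans[OF norm_ge_zero])
  finally show ?thesis
    by (simp add: mult.assoc)
qed

end

locale expanding_periodic_difference_eq = periodic_difference_eq +
  assumes expanding: "cmod (e_p h n pc n) > 1"
begin

definition error_bound :: "nat \<Rightarrow> real" where
  "error_bound m = h * E / (E - 1) * S m"

definition K :: real where
  "K = h * E / (E - 1) * Max (S ` {..<n})"

text \<open>By \<open>tail_diff\<close> and \<open>tail_tendsto_0\<close>, \<open>tail m = h * (\<Sum>j>m. 1 / cmod (e_p h n pc j))\<close>.\<close>

definition tail :: "nat \<Rightarrow> real" where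
  "tail m = error_bound m / cmod (e_p h n pc m)"

lemma error_bound_Suc: "cmod (coef m) * error_bound m = h + error_bound (Suc m)"
proof -
  have "cmod (coef m) * error_bound m = h * E / (E - 1) * (1 - 1 / E + S (Suc m))"
    unfolding error_bound_def norm_coef_mult_S[symmetric] by (simp add: ac_simps)
  also have "\<dots> = h + error_bound (Suc m)"
    using expanding E_pos by (simp add: error_bound_def field_simps)
  finally show ?thesis .
qed

lemma error_bound_pos: "error_bound m > 0"
  unfolding error_bound_def using h_pos E_pos expanding S_pos by (intro mult_pos_pos) auto

lemma error_bound_le_K: "error_bound m \<le> K"
  unfolding error_bound_def K_def using h_pos expanding S_le_Max by (intro mult_left_mono) auto

lemma error_bound_attains_K: "\<exists>k. error_bound k = K"
  using Max_S_attained by (auto simp: error_bound_def K_def)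

lemma K_pos: "K > 0"
  using error_bound_pos error_bound_le_K order.strict_trans2 by blast

lemma tail_diff: "tail m - tail (Suc m) = h / cmod (e_p h n pc (Suc m))"
proof -
  have "tail m = (h + error_bound (Suc m)) / cmod (e_p h n pc (Suc m))"
    using coef_nonzero[of m] by (simp add: tail_def e_p_Suc norm_mult error_bound_Suc[symmetric])
  then show ?thesis
    by (simp add: tail_def add_divide_distrib)
qed

lemma tail_tendsto_0: "tail \<longlonglongrightarrow> 0"
proof (rule LIMSEQ_I)
  fix r :: real
  assume "r > 0"
  obtain q where q: "K / r < E ^ q"
    using real_arch_pow[OF expanding] by blast
  have "decseq tail"
  proof (rule decseq_SucI)
    fix m
    have "0 \<le> h / cmod (e_p h n pc (Suc m))"
      using h_pos by simp
    then show "tail (Suc m) \<le> tail m"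
      using tail_diff[of m] by linarith
  qed
  have "tail m < r" if "q * n \<le> m" for m
  proof -
    have "tail m \<le> tail (q * n)"
      using \<open>decseq tail\<close> that by (rule decseqD)
    also have "\<dots> \<le> K / E ^ q"
      unfolding tail_def norm_e_p_mult_period
      using error_bound_le_K E_pos by (simp add: divide_right_mono)
    also have "\<dots> < r"
      using q \<open>r > 0\<close> E_pos by (simp add: field_simps)
    finally show ?thesis .
  qed
  moreover have "tail m \<ge> 0" for m
    using error_bound_pos[of m] by (simp add: tail_def)
  ultimately show "\<exists>M. \<forall>m\<ge>M. norm (tail m - 0) < r"
    by auto
qed

lemma approximating_solution:
  assumes residual_bound: "\<And>m. cmod (residual \<phi> m) \<le> \<epsilon>"
  shows "convergent (\<lambda>m. \<phi> m / e_p h n pc m)"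
    and "cmod (\<phi> m - lim (\<lambda>m. \<phi> m / e_p h n pc m) * e_p h n pc m) \<le> \<epsilon> * error_bound m"
proof -
  define v where "v = (\<lambda>m. \<phi> m / e_p h n pc m)"
  have step: "cmod (v (Suc m) - v m) \<le> \<epsilon> * tail m - \<epsilon> * tail (Suc m)" for m
  proof -
    have "v (Suc m) - v m = (\<phi> (Suc m) - coef m * \<phi> m) / e_p h n pc (Suc m)"
      using e_p_nonzero[of m] coef_nonzero[of m] by (simp add: v_def e_p_Suc diff_divide_distrib)
    also have "\<dots> = complex_of_real h * residual \<phi> m / e_p h n pc (Suc m)"
      using residual_scaled[of h \<phi> m n pc] h_pos by simp
    finally have "cmod (v (Suc m) - v m) = h * cmod (residual \<phi> m) / cmod (e_p h n pc (Suc m))"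
      using h_pos by (simp add: norm_mult norm_divide)
    also have "\<dots> \<le> h * \<epsilon> / cmod (e_p h n pc (Suc m))"
      using residual_bound h_pos by (intro divide_right_mono mult_left_mono) auto
    also have "\<dots> = \<epsilon> * tail m - \<epsilon> * tail (Suc m)"
      by (simp add: right_diff_distrib[symmetric] tail_diff)
    finally show ?thesis .
  qed
  have "(\<lambda>m. \<epsilon> * tail m) \<longlonglongrightarrow> 0"
    using tail_tendsto_0 by (rule tendsto_mult_right_zero)
  note telescoping = telescoping_bound_convergent[OF step this]
  show "convergent (\<lambda>m. \<phi> m / e_p h n pc m)"
    using telescoping(1) by (simp add: v_def)
  have "\<phi> m - lim v * e_p h n pc m = (v m - lim v) * e_p h n pc m"
    using e_p_nonzero[of m] by (simp add: v_def field_simps)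
  then have "cmod (\<phi> m - lim v * e_p h n pc m) = cmod (v m - lim v) * cmod (e_p h n pc m)"
    by (simp add: norm_mult)
  also have "\<dots> \<le> \<epsilon> * tail m * cmod (e_p h n pc m)"
    using telescoping(2)[of m] by (simp add: mult_right_mono)
  also have "\<dots> = \<epsilon> * error_bound m"
    using e_p_nonzero[of m] by (simp add: tail_def)
  finally show "cmod (\<phi> m - lim (\<lambda>m. \<phi> m / e_p h n pc m) * e_p h n pc m) \<le> \<epsilon> * error_bound m"
    by (simp add: v_def)
qed

lemma approximating_solution_within_K:
  assumes "\<And>m. cmod (residual \<phi> m) \<le> \<epsilon>" and "\<epsilon> \<ge> 0"
  shows "cmod (\<phi> m - lim (\<lambda>m. \<phi> m / e_p h n pc m) * e_p h n pc m) \<le> K * \<epsilon>"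
  using approximating_solution(2)[OF assms(1), of m] mult_left_mono[OF error_bound_le_K[of m] assms(2)]
  by (simp add: mult.commute)

lemma is_ulam_const_K: "is_ulam_const h n pc K"
  unfolding is_ulam_const_def
proof (intro conjI K_pos allI impI)
  fix \<epsilon> :: real and \<phi>
  assume "\<epsilon> > 0" and "\<forall>m. cmod (residual \<phi> m) \<le> \<epsilon>"
  then have "\<forall>m. cmod (\<phi> m - lim (\<lambda>m. \<phi> m / e_p h n pc m) * e_p h n pc m) \<le> K * \<epsilon>"
    using approximating_solution_within_K by simp
  moreover have "is_solution h n pc (\<lambda>m. lim (\<lambda>m. \<phi> m / e_p h n pc m) * e_p h n pc m)"
    using is_solution_multiple_e_p h_pos by simp
  ultimately show "\<exists>x. is_solution h n pc x \<and> (\<forall>m. cmod (\<phi> m - x m) \<le> K * \<epsilon>)"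
    by blast
qed

lemma multiple_e_p_bounded_imp_zero:
  assumes bounded: "\<And>m. cmod (c * e_p h n pc m) \<le> B"
  shows "c = 0"
proof (rule ccontr)
  assume "c \<noteq> 0"
  obtain q where q: "B / cmod c < E ^ q"
    using real_arch_pow[OF expanding] by blast
  have "cmod c * E ^ q \<le> B"
    using bounded[of "q * n"] by (simp add: norm_mult norm_e_p_mult_period)
  with q \<open>c \<noteq> 0\<close> show False
    by (simp add: field_simps)
qed

lemma solutions_boundedly_close_eq:
  assumes y: "is_solution h n pc y" and z: "is_solution h n pc z"
    and "\<And>m. cmod (\<phi> m - y m) \<le> B" and "\<And>m. cmod (\<phi> m - z m) \<le> B'"
  shows "y = z"
proof -
  have "cmod ((y 0 - z 0) * e_p h n pc m) \<le> B + B'" for m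
  proof -
    have "(y 0 - z 0) * e_p h n pc m = (\<phi> m - z m) - (\<phi> m - y m)"
      using is_solution_eq_multiple_e_p[OF _ y, of m] is_solution_eq_multiple_e_p[OF _ z, of m] h_pos
      by (simp add: algebra_simps)
    then show ?thesis
      using assms(3,4)[of m] norm_triangle_ineq4[of "\<phi> m - z m" "\<phi> m - y m"] by simp
  qed
  then have "y 0 = z 0"
    using multiple_e_p_bounded_imp_zero[of "y 0 - z 0" "B + B'"] by simp
  show ?thesis
  proof
    fix m
    show "y m = z m"
      using is_solution_eq_multiple_e_p[OF _ y, of m] is_solution_eq_multiple_e_p[OF _ z, of m]
        h_pos \<open>y 0 = z 0\<close> by simp
  qed
qed

lemma not_is_ulam_const_below_K:
  assumes "K' < K"
  shows "\<not> is_ulam_const h n pc K'"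
proof
  assume "is_ulam_const h n pc K'"
  \<comment> \<open>An extremal perturbation: its residual has modulus exactly 1, and it stays at distance
    \<open>error_bound m\<close> from the solution 0, the only solution it stays boundedly close to.\<close>
  define \<phi> where "\<phi> m = complex_of_real (tail m) * e_p h n pc m" for m
  have residual_bound: "cmod (residual \<phi> m) \<le> 1" for m
  proof -
    have "\<phi> (Suc m) - coef m * \<phi> m = e_p h n pc (Suc m) * complex_of_real (tail (Suc m) - tail m)"
      by (simp add: \<phi>_def e_p_Suc algebra_simps)
    also have "\<dots> = - e_p h n pc (Suc m) * complex_of_real (tail m - tail (Suc m))"
      by (simp add: algebra_simps)
    also have "\<dots> = - e_p h n pc (Suc m) * complex_of_real (h / cmod (e_p h n pc (Suc m)))"
      by (simp only: tail_diff)
    finally have "cmod (\<phi> (Suc m) - coef m * \<phi> m) = h"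
      using e_p_nonzero[of "Suc m"] h_pos by (simp add: norm_mult norm_divide)
    then show ?thesis
      using residual_scaled[of h \<phi> m n pc] h_pos by (simp add: norm_mult)
  qed
  have norm_\<phi>: "cmod (\<phi> m) = error_bound m" for m
    using e_p_nonzero[of m] error_bound_pos[of m] by (simp add: \<phi>_def tail_def norm_mult norm_divide)
  obtain y where y: "is_solution h n pc y" and near: "\<And>m. cmod (\<phi> m - y m) \<le> K'"
    using is_ulam_constD[OF \<open>is_ulam_const h n pc K'\<close> zero_less_one residual_bound] by auto
  have "y = (\<lambda>m. 0)"
  proof (rule solutions_boundedly_close_eq[OF y _ near])
    show "is_solution h n pc (\<lambda>m. 0)"
      using is_solution_multiple_e_p[of h n pc 0] h_pos by simp
    show "cmod (\<phi> m - 0) \<le> K" for m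
      using norm_\<phi> error_bound_le_K by simp
  qed
  obtain k where "error_bound k = K"
    using error_bound_attains_K by blast
  then have "K \<le> K'"
    using near[of k] norm_\<phi>[of k] \<open>y = (\<lambda>m. 0)\<close> by simp
  with assms show False
    by simp
qed

lemma is_min_ulam_const_K: "is_min_ulam_const h n pc K"
  unfolding is_min_ulam_const_def using is_ulam_const_K not_is_ulam_const_below_K by blast

theorem expanding_stability:
  assumes "\<epsilon> \<ge> 0" and residual_bound: "\<And>m. cmod (residual \<phi> m) \<le> \<epsilon>"
  defines "x \<equiv> \<lambda>m. lim (\<lambda>m. \<phi> m / e_p h n pc m) * e_p h n pc m"
  shows "convergent (\<lambda>m. \<phi> m / e_p h n pc m) \<and> is_solution h n pc x
    \<and> (\<forall>m. cmod (\<phi> m - x m) \<le> K * \<epsilon>)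
    \<and> (\<forall>y. is_solution h n pc y \<and> (\<forall>m. cmod (\<phi> m - y m) \<le> K * \<epsilon>) \<longrightarrow> y = x)
    \<and> is_min_ulam_const h n pc K"
proof (intro conjI is_min_ulam_const_K)
  show "convergent (\<lambda>m. \<phi> m / e_p h n pc m)"
    using residual_bound by (rule approximating_solution(1))
  show x: "is_solution h n pc x"
    unfolding x_def using h_pos by (simp add: is_solution_multiple_e_p)
  show close: "\<forall>m. cmod (\<phi> m - x m) \<le> K * \<epsilon>"
    unfolding x_def using approximating_solution_within_K[OF residual_bound \<open>\<epsilon> \<ge> 0\<close>] by blast
  show "\<forall>y. is_solution h n pc y \<and> (\<forall>m. cmod (\<phi> m - y m) \<le> K * \<epsilon>) \<longrightarrow> y = x"
    using solutions_boundedly_close_eq x close by blast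
qed

end

theorem theorem4p3:
  fixes h \<epsilon> :: real and n :: nat and pc :: "nat \<Rightarrow> complex" and \<phi> :: "nat \<Rightarrow> complex"
  assumes h: "h > 0"
    and n: "n \<ge> 1"
    and pc: "\<forall>k<n. pc k \<noteq> - 1 / complex_of_real h"
    and per: "minimal_period n (pfun n pc)"
    and E0: "0 < cmod (e_p h n pc n)"
    and E1: "cmod (e_p h n pc n) \<noteq> 1"
    and eps: "\<epsilon> > 0"
    and phi: "\<forall>m. cmod (delta_h h \<phi> m - pfun n pc m * \<phi> m) \<le> \<epsilon>"
  shows
    "(cmod (e_p h n pc n) > 1 \<longrightarrow>
       (let E = cmod (e_p h n pc n);
            K = h * E / (-1 + E) * Max (S_k h n pc ` {..<n});
            L = lim (\<lambda>m. \<phi> m / e_p h n pc m);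
            x = (\<lambda>m. L * e_p h n pc m)
        in convergent (\<lambda>m. \<phi> m / e_p h n pc m)
           \<and> is_solution h n pc x
           \<and> (\<forall>m. cmod (\<phi> m - x m) \<le> K * \<epsilon>)
           \<and> (\<forall>y. is_solution h n pc y \<and> (\<forall>m. cmod (\<phi> m - y m) \<le> K * \<epsilon>) \<longrightarrow> y = x)
           \<and> is_min_ulam_const h n pc K))
     \<and> (cmod (e_p h n pc n) < 1 \<longrightarrow>
       (let E = cmod (e_p h n pc n)
        in \<forall>x. is_solution h n pc x \<and>
               cmod (\<phi> 0 - x 0) < \<epsilon> * h * (E * S_k h n pc 0 / (1 - E)) \<longrightarrow>
               (\<forall>m. cmod (\<phi> m - x m) < \<epsilon> * h * E / (1 - E) * Max (S_k h n pc ` {..<n}))))"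
proof -
  \<comment> \<open>Hypothesis \<open>pc\<close> follows from \<open>E0\<close>.\<close>
  interpret periodic_difference_eq h n pc
    using h n E0 by unfold_locales auto
  show ?thesis
  proof (cases "E > 1")
    case True
    then interpret expanding_periodic_difference_eq h n pc
      by unfold_locales
    have K_eq: "h * E / (-1 + E) * Max (S ` {..<n}) = K"
      by (simp add: K_def)
    show ?thesis
      unfolding Let_def K_eq using True expanding_stability[OF _ phi[rule_format]] eps by simp
  next
    case False
    then show ?thesis
      unfolding Let_def using contracting_stability[OF _ _ phi[rule_format]] by auto
  qed
qed

end
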